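(* In the setting of the context, consider a Case 2 spacetime ($\partial_v r_->0$) with $\lim_{v\to\infty}x_-(v)/x_+(v)=0$. If there exist constants $\alpha,\beta$ with $0<\alpha<1$, $0<\beta$, and constants $\varepsilon_\alpha,\varepsilon_\beta>0$ such that $$\frac{dx_-/dv}{(x_++\beta x_-)x_-}<-\frac{h_c}{2}(1+\varepsilon_\beta)\frac{1+\beta}{\beta},\qquad \frac{dx_+/dv}{(\alpha x_+-x_-)x_+}>-\frac{h_c}{2}(1-\varepsilon_\alpha)\frac{1-\alpha}{\alpha}$$ hold for all $v>v_0$ for some $v_0$, then the spacetime is of Type 2.
   Context: Spherically symmetric spacetime $ds^2=-f(v,r)A(v,r)^2dv^2+2A(v,r)\,dr\,dv+r^2d\Omega^2$ with $A>0$, $f,A\to1$ as $r\to\infty$, $f(v,0)=1$, $\partial_rf(v,0)=\partial_rA(v,0)=0$; $f(v,\cdot)$ has exactly two zeros $r_+(v)>r_-(v)$ (outer/inner apparent horizons, AHs), $f=F(r-r_+)(r-r_-)$ with $F>0$, and $h=AF>0$. Assumptions: $\partial_v r_+<0$; $r_\pm(v)\to r_c$ as $v\to\infty$; the sign of $\partial_v r_-$ is constant; the $v\to\infty$ limits of $A,F,h$ behave as analytic functions of $r$, so all $\partial_r^n h$ converge as $v\to\infty$; $h_c=\lim_{v\to\infty}h(v,r_c)$. With $x=r-r_c$, $x_\pm=r_\pm-r_c$ and $h$ regarded as a function of $(v,x)$, radially outgoing null geodesics solve $dx/dv=\tfrac12h(v,x)(x-x_+(v))(x-x_-(v))$. Case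 2 means $\partial_v r_->0$. In Case 2, Type 1 means that there is a unique outgoing null geodesic between the two AHs crossing neither AH (the event horizon); Type 2 means a set of positive measure of such geodesics exists. *)

theory Defs
  imports "HOL-Analysis.Analysis"
begin

text \<open>Coordinates: x = r - r_c; xp, xm are x_+(v), x_-(v); h v x is h(v,x).\<close>

definition outgoing_geodesic ::
  "(real \<Rightarrow> real \<Rightarrow> real) \<Rightarrow> (real \<Rightarrow> real) \<Rightarrow> (real \<Rightarrow> real) \<Rightarrow> real \<Rightarrow> (real \<Rightarrow> real) \<Rightarrow> bool" where
  "outgoing_geodesic h xp xm v1 x \<longleftrightarrow>
     (\<forall>v\<ge>v1. (x has_real_derivative (h v (x v) * (x v - xp v) * (x v - xm v) / 2)) (at v within {v1..}))"

definition between_AHs :: "(real \<Rightarrow> real) \<Rightarrow> (real \<Rightarrow> real) \<Rightarrow> real \<Rightarrow> (real \<Rightarrow> real) \<Rightarrow> bool" where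
  "between_AHs xp xm v1 x \<longleftrightarrow> (\<forall>v\<ge>v1. xm v < x v \<and> x v < xp v)"

definition trapped_data ::
  "(real \<Rightarrow> real \<Rightarrow> real) \<Rightarrow> (real \<Rightarrow> real) \<Rightarrow> (real \<Rightarrow> real) \<Rightarrow> real \<Rightarrow> real set" where
  "trapped_data h xp xm v1 =
     {x0. \<exists>x. outgoing_geodesic h xp xm v1 x \<and> x v1 = x0 \<and> between_AHs xp xm v1 x}"

definition type2 :: "(real \<Rightarrow> real \<Rightarrow> real) \<Rightarrow> (real \<Rightarrow> real) \<Rightarrow> (real \<Rightarrow> real) \<Rightarrow> bool" where
  "type2 h xp xm \<longleftrightarrow>
     (\<exists>v1. trapped_data h xp xm v1 \<in> sets lebesgue \<and> 0 < emeasure lebesgue (trapped_data h xp xm v1))"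

end

theory Submission
  imports Defs
begin

(* Take the upper barrier z = alpha x_+ just below the outer horizon and the lower barrier
   y = -beta x_- just above the inner one; as x_-/x_+ -> 0, eventually x_- < y < z < x_+.
   Because h(v, x) -> h_c uniformly for x near 0 while x_+, x_- -> 0, the two hypotheses on
   dx_+/dv and dx_-/dv say that from some time v1 on the geodesic field exceeds dy/dv along y
   and stays below dz/dv along z. So every outgoing null geodesic starting at time v1 in
   (y v1, z v1) is trapped between y and z, hence between the horizons, for ever. Solutions of
   the locally Lipschitz geodesic equation do not cross, so the trapped initial data form an
   interval, which contains (y v1, z v1) and therefore has positive measure. *)

lemma has_real_derivative_within_imp_continuous_on:
  assumes "\<And>t. t \<in> S \<Longrightarrow> (f has_real_derivative f' t) (at t within S)"
  shows "continuous_on S f"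
  using assms DERIV_continuous continuous_on_eq_continuous_within by blast

lemma nonneg_derivative_within_imp_le:
  fixes f :: "real \<Rightarrow> real"
  assumes "a \<le> b"
    and deriv: "\<And>t. t \<in> {a..b} \<Longrightarrow> (f has_real_derivative f' t) (at t within {a..b})"
    and nonneg: "\<And>t. t \<in> {a..b} \<Longrightarrow> 0 \<le> f' t"
  shows "f a \<le> f b"
proof (rule DERIV_nonneg_imp_increasing_open[OF \<open>a \<le> b\<close>])
  fix t assume "a < t" "t < b"
  then show "\<exists>y. DERIV f t :> y \<and> 0 \<le> y"
    using deriv[of t] nonneg[of t] at_within_Icc_at[of a t b] by auto
qed (rule has_real_derivative_within_imp_continuous_on[OF deriv])

lemma square_exp_bounds_of_derivative_bound:
  fixes D D' :: "real \<Rightarrow> real"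
  assumes "a \<le> b"
    and deriv: "\<And>t. t \<in> {a..b} \<Longrightarrow> (D has_real_derivative D' t) (at t within {a..b})"
    and bound: "\<And>t. t \<in> {a..b} \<Longrightarrow> \<bar>D' t\<bar> \<le> L * \<bar>D t\<bar>"
  shows "(D a)\<^sup>2 * exp (2 * L * a) \<le> (D b)\<^sup>2 * exp (2 * L * b)"
    and "(D b)\<^sup>2 * exp (- (2 * L * b)) \<le> (D a)\<^sup>2 * exp (- (2 * L * a))"
proof -
  have product_bound: "\<bar>D t * D' t\<bar> \<le> L * (D t)\<^sup>2" if "t \<in> {a..b}" for t
    using mult_left_mono[OF bound[OF that], of "\<bar>D t\<bar>"]
    by (simp add: abs_mult power2_eq_square algebra_simps)
  show "(D a)\<^sup>2 * exp (2 * L * a) \<le> (D b)\<^sup>2 * exp (2 * L * b)"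
  proof (rule nonneg_derivative_within_imp_le[OF \<open>a \<le> b\<close>])
    fix t assume t: "t \<in> {a..b}"
    show "((\<lambda>t. (D t)\<^sup>2 * exp (2 * L * t)) has_real_derivative
        (2 * (D t * D' t) + 2 * L * (D t)\<^sup>2) * exp (2 * L * t)) (at t within {a..b})"
      by (rule derivative_eq_intros deriv[OF t] refl | simp add: algebra_simps)+
    show "0 \<le> (2 * (D t * D' t) + 2 * L * (D t)\<^sup>2) * exp (2 * L * t)"
      using product_bound[OF t] by (intro mult_nonneg_nonneg) (auto simp: abs_le_iff)
  qed
  have "- ((D a)\<^sup>2 * exp (- (2 * L * a))) \<le> - ((D b)\<^sup>2 * exp (- (2 * L * b)))"
  proof (rule nonneg_derivative_within_imp_le[OF \<open>a \<le> b\<close>])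
    fix t assume t: "t \<in> {a..b}"
    show "((\<lambda>t. - ((D t)\<^sup>2 * exp (- (2 * L * t)))) has_real_derivative
        (2 * L * (D t)\<^sup>2 - 2 * (D t * D' t)) * exp (- (2 * L * t))) (at t within {a..b})"
      by (rule derivative_eq_intros deriv[OF t] refl | simp add: algebra_simps)+
    show "0 \<le> (2 * L * (D t)\<^sup>2 - 2 * (D t * D' t)) * exp (- (2 * L * t))"
      using product_bound[OF t] by (intro mult_nonneg_nonneg) (auto simp: abs_le_iff)
  qed
  then show "(D b)\<^sup>2 * exp (- (2 * L * b)) \<le> (D a)\<^sup>2 * exp (- (2 * L * a))"
    by simp
qed

text \<open>At a first zero \<open>s0\<close>, \<open>f' s0 > 0\<close> would force \<open>f < 0\<close> just before \<open>s0\<close>.\<close>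
lemma pos_if_derivative_pos_at_zeros:
  fixes f f' :: "real \<Rightarrow> real"
  assumes deriv: "\<And>t. a \<le> t \<Longrightarrow> (f has_real_derivative f' t) (at t within {a..})"
    and "0 < f a"
    and crossing: "\<And>t. a \<le> t \<Longrightarrow> f t = 0 \<Longrightarrow> 0 < f' t"
    and "a \<le> t"
  shows "0 < f t"
proof (rule ccontr)
  assume "\<not> 0 < f t"
  have cont: "continuous_on {a..} f"
    using deriv by (intro has_real_derivative_within_imp_continuous_on) auto
  have cont_t: "continuous_on {a..t} f"
    using cont by (rule continuous_on_subset) auto
  define Z where "Z = {s \<in> {a..t}. f s = 0}"
  obtain z where "a \<le> z" "z \<le> t" "f z = 0"
    using IVT2'[of f t 0 a] \<open>\<not> 0 < f t\<close> \<open>0 < f a\<close> \<open>a \<le> t\<close> cont_t by auto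
  then have "Z \<noteq> {}" by (auto simp: Z_def)
  moreover have "closed Z"
    unfolding Z_def using continuous_closed_preimage_constant[OF cont_t] by auto
  moreover have "bdd_below Z" by (auto simp: Z_def bdd_below_def)
  ultimately have "Inf Z \<in> Z" by (simp add: closed_contains_Inf)
  define s0 where "s0 = Inf Z"
  have s0: "a \<le> s0" "s0 \<le> t" "f s0 = 0" using \<open>Inf Z \<in> Z\<close> by (auto simp: s0_def Z_def)
  have pos_before: "0 < f s" if "a \<le> s" "s < s0" for s
  proof (rule ccontr)
    assume "\<not> 0 < f s"
    moreover have "continuous_on {a..s} f"
      using cont by (rule continuous_on_subset) auto
    ultimately obtain s' where "a \<le> s'" "s' \<le> s" "f s' = 0"
      using IVT2'[of f s 0 a] \<open>0 < f a\<close> \<open>a \<le> s\<close> by auto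
    then have "s' \<in> Z" using that s0 by (auto simp: Z_def)
    then have "s0 \<le> s'" unfolding s0_def using \<open>bdd_below Z\<close> by (rule cInf_lower)
    with \<open>s' \<le> s\<close> \<open>s < s0\<close> show False by linarith
  qed
  have "a < s0" using s0 \<open>0 < f a\<close> by (cases "a = s0") auto
  obtain d where "0 < d" and decr: "\<And>h. 0 < h \<Longrightarrow> s0 - h \<in> {a..} \<Longrightarrow> h < d \<Longrightarrow> f (s0 - h) < f s0"
    using has_real_derivative_pos_inc_left[OF deriv[OF s0(1)] crossing[OF s0(1,3)]] by blast
  define h where "h = min (d / 2) (s0 - a)"
  have "0 < h" "h < d" "a \<le> s0 - h" using \<open>0 < d\<close> \<open>a < s0\<close> by (auto simp: h_def)
  then show False using decr[of h] pos_before[of "s0 - h"] s0(3) by auto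
qed

lemma pos_if_derivative_neg_tendsto_zero:
  fixes f :: "real \<Rightarrow> real"
  assumes "\<And>v. (f has_real_derivative f' v) (at v)" "\<And>v. f' v < 0" and "(f \<longlongrightarrow> 0) at_top"
  shows "0 < f v"
proof -
  have decreasing: "f t < f s" if "s < t" for s t
    by (rule DERIV_neg_imp_decreasing[OF that]) (use assms(1,2) in blast)
  have "\<forall>\<^sub>F w in at_top. f w \<le> f (v + 1)"
    using decreasing by (intro eventually_at_top_linorderI[of "v + 1"]) (auto simp: le_less)
  then have "0 \<le> f (v + 1)" by (rule tendsto_upperbound[OF \<open>(f \<longlongrightarrow> 0) at_top\<close>]) simp
  also have "f (v + 1) < f v" by (rule decreasing) simp
  finally show ?thesis .
qed

lemma continuous_on_compose_case_prod:
  assumes "continuous_on UNIV (case_prod G)" "continuous_on S f"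
  shows "continuous_on S (\<lambda>s. G s (f s))"
proof -
  have "continuous_on S (\<lambda>s. (s, f s))" by (intro continuous_intros assms(2))
  from continuous_on_compose2[OF assms(1) this] show ?thesis by simp
qed

lemma integral_exp_weighted_bound:
  fixes f :: "real \<Rightarrow> real"
  assumes "0 < K" "a \<le> r" "f integrable_on {a..r}"
    and bound: "\<And>s. s \<in> {a..r} \<Longrightarrow> \<bar>f s\<bar> \<le> c * exp (K * (s - a))"
  shows "\<bar>integral {a..r} f\<bar> \<le> c * exp (K * (r - a)) / K"
proof -
  have "0 \<le> c" using bound[of a] \<open>a \<le> r\<close> by auto
  have "((\<lambda>s. c * exp (K * (s - a))) has_integral c * exp (K * (r - a)) / K - c / K) {a..r}"
  proof -
    have "((\<lambda>s. c * exp (K * (s - a)) / K) has_real_derivative c * exp (K * (s - a))) (at s within {a..r})"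
      for s using \<open>0 < K\<close> by (auto intro!: derivative_eq_intros)
    from fundamental_theorem_of_calculus[OF \<open>a \<le> r\<close>, of "\<lambda>s. c * exp (K * (s - a)) / K"] this
    show ?thesis by (simp add: has_real_derivative_iff_has_vector_derivative)
  qed
  then have "\<bar>integral {a..r} f\<bar> \<le> c * exp (K * (r - a)) / K - c / K"
    using integral_norm_bound_integral[OF \<open>f integrable_on {a..r}\<close>, of "\<lambda>s. c * exp (K * (s - a))"] bound
    by (auto simp: has_integral_iff)
  with \<open>0 \<le> c\<close> \<open>0 < K\<close> show ?thesis by (smt (verit) divide_nonneg_pos)
qed

lemma lipschitz_on_Icc_of_continuous_derivative:
  fixes g g' :: "real \<Rightarrow> real \<Rightarrow> real"
  assumes deriv: "\<And>t x. (g t has_real_derivative g' t x) (at x)"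
    and cont: "continuous_on UNIV (case_prod g')"
  shows "\<exists>L. \<forall>t\<in>{a..b}. L-lipschitz_on {m..M} (g t)"
proof -
  have "compact (case_prod g' ` ({a..b} \<times> {m..M}))"
    by (intro compact_continuous_image continuous_on_subset[OF cont] compact_Times compact_Icc) auto
  then obtain B where B: "\<And>t x. t \<in> {a..b} \<Longrightarrow> x \<in> {m..M} \<Longrightarrow> \<bar>g' t x\<bar> \<le> B"
    by (fastforce dest: compact_imp_bounded simp: bounded_iff)
  have "(max B 0)-lipschitz_on {m..M} (g t)" if "t \<in> {a..b}" for t
  proof (rule lipschitz_onI)
    fix x y assume "x \<in> {m..M}" "y \<in> {m..M}"
    then show "dist (g t x) (g t y) \<le> max B 0 * dist x y"
      using field_differentiable_bound[of "{m..M}" "g t" "g' t" "max B 0" x y] B[OF that]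
        has_field_derivative_at_within[OF deriv]
      by (force simp: dist_real_def)
  qed simp
  then show ?thesis by blast
qed

lemma tendsto_compose_uniform_limit:
  fixes f :: "'i \<Rightarrow> 'a::metric_space \<Rightarrow> 'b::metric_space"
  assumes ul: "uniform_limit S f g F" and cont: "\<forall>\<^sub>F n in F. continuous_on S (f n)"
    and x: "x \<in> interior S" and u: "(u \<longlongrightarrow> x) F"
  shows "((\<lambda>n. f n (u n)) \<longlongrightarrow> g x) F"
proof (cases "F = bot")
  case False
  have "continuous_on S g" by (rule uniform_limit_theorem[OF cont ul False])
  then have "isCont g x" using x by (rule continuous_on_interior)
  then have g_u: "((\<lambda>n. g (u n)) \<longlongrightarrow> g x) F" using u by (rule isCont_tendsto_compose)
  have u_in: "\<forall>\<^sub>F n in F. u n \<in> S"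
    using topological_tendstoD[OF u open_interior x] by (rule eventually_mono) (use interior_subset in blast)
  show ?thesis
  proof (rule tendstoI)
    fix e :: real assume "0 < e"
    have "\<forall>\<^sub>F n in F. \<forall>y\<in>S. dist (f n y) (g y) < e / 2"
      using uniform_limitD[OF ul, of "e / 2"] \<open>0 < e\<close> by simp
    moreover have "\<forall>\<^sub>F n in F. dist (g (u n)) (g x) < e / 2"
      using tendstoD[OF g_u, of "e / 2"] \<open>0 < e\<close> by simp
    ultimately show "\<forall>\<^sub>F n in F. dist (f n (u n)) (g x) < e"
      using u_in
    proof eventually_elim
      case (elim n)
      then have "dist (f n (u n)) (g (u n)) < e / 2" by blast
      then show ?case
        using elim(2) dist_triangle[of "f n (u n)" "g x" "g (u n)"] by linarith
    qed
  qed
qed simp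

lemma tendsto_compose_vanishing_of_uniform_limit:
  fixes h :: "real \<Rightarrow> real \<Rightarrow> real"
  assumes "0 < \<delta>" "uniform_limit {-\<delta>..\<delta>} h H at_top" "\<And>v x. isCont (h v) x"
    and "((\<lambda>v. h v 0) \<longlongrightarrow> c) at_top" "(u \<longlongrightarrow> 0) at_top"
  shows "((\<lambda>v. h v (u v)) \<longlongrightarrow> c) at_top"
proof -
  have "0 \<in> interior {-\<delta>..\<delta>}" using \<open>0 < \<delta>\<close> by simp
  moreover have "\<forall>\<^sub>F v in at_top. continuous_on {-\<delta>..\<delta>} (h v)"
    using assms(3) by (simp add: continuous_at_imp_continuous_on)
  ultimately have compose: "((\<lambda>v. h v (w v)) \<longlongrightarrow> H 0) at_top" if "(w \<longlongrightarrow> 0) at_top" for w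
    using tendsto_compose_uniform_limit[OF assms(2)] that by blast
  have "H 0 = c"
    using tendsto_unique[OF trivial_limit_at_top_linorder compose[OF tendsto_const] assms(4)] .
  then show ?thesis using compose[OF assms(5)] by simp
qed

section \<open>Scalar ordinary differential equations\<close>

definition ode_solution_on :: "(real \<Rightarrow> real \<Rightarrow> real) \<Rightarrow> real set \<Rightarrow> (real \<Rightarrow> real) \<Rightarrow> bool" where
  "ode_solution_on G S X \<longleftrightarrow> (\<forall>t\<in>S. (X has_real_derivative G t (X t)) (at t within S))"

lemma ode_solution_on_subset: "ode_solution_on G S X \<Longrightarrow> T \<subseteq> S \<Longrightarrow> ode_solution_on G T X"
  unfolding ode_solution_on_def by (meson DERIV_subset subsetD)

lemma ode_solution_on_continuous_on: "ode_solution_on G S X \<Longrightarrow> continuous_on S X"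
  unfolding ode_solution_on_def by (rule has_real_derivative_within_imp_continuous_on) blast

lemma ode_solutions_Icc_square_exp_bounds:
  assumes lip: "\<forall>s\<in>{a..b}. L-lipschitz_on UNIV (G s)"
    and X: "ode_solution_on G {a..b} X" and Y: "ode_solution_on G {a..b} Y"
    and t: "t \<in> {a..b}"
  shows "(Y a - X a)\<^sup>2 * exp (2 * L * a) \<le> (Y t - X t)\<^sup>2 * exp (2 * L * t)"
    and "(Y t - X t)\<^sup>2 * exp (- (2 * L * t)) \<le> (Y a - X a)\<^sup>2 * exp (- (2 * L * a))"
proof -
  have sub: "{a..t} \<subseteq> {a..b}" using t by auto
  have deriv: "((\<lambda>s. Y s - X s) has_real_derivative G s (Y s) - G s (X s)) (at s within {a..t})"
    if "s \<in> {a..t}" for s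
    using X Y that sub unfolding ode_solution_on_def by (blast intro: DERIV_diff DERIV_subset)
  have bound: "\<bar>G s (Y s) - G s (X s)\<bar> \<le> L * \<bar>Y s - X s\<bar>" if "s \<in> {a..t}" for s
    using lipschitz_onD[of L UNIV "G s" "Y s" "X s"] lip that sub by (auto simp: dist_real_def)
  show "(Y a - X a)\<^sup>2 * exp (2 * L * a) \<le> (Y t - X t)\<^sup>2 * exp (2 * L * t)"
    and "(Y t - X t)\<^sup>2 * exp (- (2 * L * t)) \<le> (Y a - X a)\<^sup>2 * exp (- (2 * L * a))"
    using square_exp_bounds_of_derivative_bound[OF _ deriv bound] t by auto
qed

lemma ode_solutions_Icc_eq:
  assumes "\<forall>s\<in>{a..b}. L-lipschitz_on UNIV (G s)"
    and "ode_solution_on G {a..b} X" "ode_solution_on G {a..b} Y"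
    and "X a = Y a" "t \<in> {a..b}"
  shows "X t = Y t"
  using ode_solutions_Icc_square_exp_bounds(2)[OF assms(1-3,5)] \<open>X a = Y a\<close>
  by (simp add: mult_le_0_iff)

lemma ode_solutions_Icc_less:
  assumes lip: "\<forall>s\<in>{a..b}. L-lipschitz_on UNIV (G s)"
    and X: "ode_solution_on G {a..b} X" and Y: "ode_solution_on G {a..b} Y"
    and "X a < Y a" "t \<in> {a..b}"
  shows "X t < Y t"
proof (rule ccontr)
  assume "\<not> X t < Y t"
  moreover have "continuous_on {a..b} (\<lambda>s. Y s - X s)"
    using X Y by (intro continuous_intros ode_solution_on_continuous_on)
  then have "continuous_on {a..t} (\<lambda>s. Y s - X s)"
    by (rule continuous_on_subset) (use \<open>t \<in> {a..b}\<close> in auto)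
  ultimately obtain s where s: "s \<in> {a..t}" "Y s - X s = 0"
    using IVT2'[of "\<lambda>s. Y s - X s" t 0 a] \<open>X a < Y a\<close> \<open>t \<in> {a..b}\<close> by force
  then have "s \<in> {a..b}" using \<open>t \<in> {a..b}\<close> by auto
  from ode_solutions_Icc_square_exp_bounds(1)[OF lip X Y this] s
  have "(Y a - X a)\<^sup>2 * exp (2 * L * a) \<le> 0" by simp
  with \<open>X a < Y a\<close> show False by (simp add: mult_le_0_iff)
qed

lemma ode_solution_below_supersolution:
  assumes X: "ode_solution_on G {a..} X"
    and Z: "\<And>t. a \<le> t \<Longrightarrow> (Z has_real_derivative Z' t) (at t within {a..})"
    and super: "\<And>t. a \<le> t \<Longrightarrow> G t (Z t) < Z' t"
    and "X a < Z a" "a \<le> t"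
  shows "X t < Z t"
proof -
  have "0 < Z t - X t"
  proof (rule pos_if_derivative_pos_at_zeros[of a "\<lambda>t. Z t - X t" "\<lambda>t. Z' t - G t (X t)" t])
    fix s assume "a \<le> s"
    then show "((\<lambda>t. Z t - X t) has_real_derivative Z' s - G s (X s)) (at s within {a..})"
      using X Z unfolding ode_solution_on_def by (intro DERIV_diff) auto
  next
    fix s assume "a \<le> s" "Z s - X s = 0"
    then show "0 < Z' s - G s (X s)" using super[OF \<open>a \<le> s\<close>] by simp
  qed (use assms in auto)
  then show ?thesis by simp
qed

lemma ode_solution_above_subsolution:
  assumes X: "ode_solution_on G {a..} X"
    and Y: "\<And>t. a \<le> t \<Longrightarrow> (Y has_real_derivative Y' t) (at t within {a..})"
    and sub: "\<And>t. a \<le> t \<Longrightarrow> Y' t < G t (Y t)"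
    and "Y a < X a" "a \<le> t"
  shows "Y t < X t"
proof -
  have "0 < X t - Y t"
  proof (rule pos_if_derivative_pos_at_zeros[of a "\<lambda>t. X t - Y t" "\<lambda>t. G t (X t) - Y' t" t])
    fix s assume "a \<le> s"
    then show "((\<lambda>t. X t - Y t) has_real_derivative G s (X s) - Y' s) (at s within {a..})"
      using X Y unfolding ode_solution_on_def by (intro DERIV_diff) auto
  next
    fix s assume "a \<le> s" "X s - Y s = 0"
    then show "0 < G s (X s) - Y' s" using sub[OF \<open>a \<le> s\<close>] by simp
  qed (use assms in auto)
  then show ?thesis by simp
qed

text \<open>Picard's operator is a contraction for the weighted norm \<open>sup |X t| exp (- K (t - a))\<close>
  once \<open>K > 2 L\<close>. To use the sup norm of bounded continuous functions we conjugate by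
  \<open>u t = exp (- K (t - a)) X t\<close>, which turns Picard's operator into the following one.\<close>
definition weighted_picard ::
  "(real \<Rightarrow> real \<Rightarrow> real) \<Rightarrow> real \<Rightarrow> real \<Rightarrow> real \<Rightarrow> (real \<Rightarrow> real) \<Rightarrow> real \<Rightarrow> real" where
  "weighted_picard G K a x0 u t =
    exp (- K * (t - a)) * (x0 + integral {a..t} (\<lambda>s. G s (exp (K * (s - a)) * u s)))"

lemma weighted_picard_integrable:
  fixes G :: "real \<Rightarrow> real \<Rightarrow> real" and u :: "real \<Rightarrow> real"
  assumes "continuous_on UNIV (case_prod G)" "continuous_on UNIV u"
  shows "(\<lambda>s. G s (exp (K * (s - a)) * u s)) integrable_on {a..t}"
proof -
  have "continuous_on UNIV (\<lambda>s. G s (exp (K * (s - a)) * u s))"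
    by (intro continuous_on_compose_case_prod[OF assms(1)] continuous_intros assms(2))
  then show ?thesis by (blast intro: integrable_continuous_real continuous_on_subset)
qed

lemma weighted_picard_continuous_on:
  fixes G :: "real \<Rightarrow> real \<Rightarrow> real" and u :: "real \<Rightarrow> real"
  assumes "continuous_on UNIV (case_prod G)" "continuous_on UNIV u"
  shows "continuous_on {a..b} (weighted_picard G K a x0 u)"
  unfolding weighted_picard_def[abs_def]
  by (intro continuous_intros indefinite_integral_continuous_1 weighted_picard_integrable assms)

lemma weighted_picard_dist_le:
  fixes G :: "real \<Rightarrow> real \<Rightarrow> real" and u v :: "real \<Rightarrow> real"
  assumes cont: "continuous_on UNIV (case_prod G)"
    and lip: "\<forall>t\<in>{a..b}. L-lipschitz_on UNIV (G t)" and "0 < K" and r: "r \<in> {a..b}"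
    and u: "continuous_on UNIV u" and v: "continuous_on UNIV v" and uv: "\<And>s. \<bar>u s - v s\<bar> \<le> d"
  shows "\<bar>weighted_picard G K a x0 u r - weighted_picard G K a x0 v r\<bar> \<le> L / K * d"
proof -
  have "0 \<le> L" using lip r by (auto intro: lipschitz_on_nonneg)
  let ?d = "\<lambda>s. G s (exp (K * (s - a)) * u s) - G s (exp (K * (s - a)) * v s)"
  have "\<bar>?d s\<bar> \<le> L * d * exp (K * (s - a))" if "s \<in> {a..r}" for s
  proof -
    have "\<bar>?d s\<bar> \<le> L * \<bar>exp (K * (s - a)) * u s - exp (K * (s - a)) * v s\<bar>"
      using lipschitz_onD[of L UNIV "G s"] lip that r by (auto simp: dist_real_def)
    also have "\<dots> = L * (exp (K * (s - a)) * \<bar>u s - v s\<bar>)"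
      by (simp add: abs_mult flip: right_diff_distrib)
    also have "\<dots> \<le> L * (exp (K * (s - a)) * d)"
      using \<open>0 \<le> L\<close> uv by (intro mult_left_mono) auto
    finally show ?thesis by (simp add: algebra_simps)
  qed
  then have integral_bound: "\<bar>integral {a..r} ?d\<bar> \<le> L * d * exp (K * (r - a)) / K"
    using r by (intro integral_exp_weighted_bound \<open>0 < K\<close> integrable_diff
        weighted_picard_integrable cont u v) auto
  have "\<bar>weighted_picard G K a x0 u r - weighted_picard G K a x0 v r\<bar> =
      exp (- K * (r - a)) * \<bar>integral {a..r} ?d\<bar>"
    using weighted_picard_integrable[OF cont u] weighted_picard_integrable[OF cont v]
    by (simp add: weighted_picard_def abs_mult integral_diff flip: right_diff_distrib)
  also have "\<dots> \<le> exp (- K * (r - a)) * (L * d * exp (K * (r - a)) / K)"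
    by (rule mult_left_mono[OF integral_bound]) simp
  also have "\<dots> = L / K * d"
    by (simp add: mult_exp_exp field_simps flip: exp_add)
  finally show ?thesis .
qed

lemma integral_equation_solution_exists_Icc:
  fixes G :: "real \<Rightarrow> real \<Rightarrow> real"
  assumes cont: "continuous_on UNIV (case_prod G)" and "a \<le> b"
    and lip: "\<forall>t\<in>{a..b}. L-lipschitz_on UNIV (G t)"
  shows "\<exists>X. continuous_on {a..b} X \<and> (\<forall>t\<in>{a..b}. X t = x0 + integral {a..t} (\<lambda>s. G s (X s)))"
proof -
  have "0 \<le> L" using lip \<open>a \<le> b\<close> by (auto intro: lipschitz_on_nonneg)
  define K where "K = 2 * L + 1"
  have "0 < K" "L / K \<le> 1/2" using \<open>0 \<le> L\<close> by (auto simp: K_def field_simps)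
  let ?\<Psi> = "weighted_picard G K a x0"
  have ext_bcontfun: "ext_cont (?\<Psi> u) a b \<in> bcontfun" if "continuous_on UNIV u" for u
  proof -
    note \<Psi>_cont = weighted_picard_continuous_on[OF cont that, of a b K x0]
    then have "bounded (?\<Psi> u ` cbox a b)"
      by (auto intro: compact_imp_bounded compact_continuous_image)
    with \<Psi>_cont show ?thesis
      unfolding bcontfun_def ext_cont_def by (auto intro!: clamp_continuous_on clamp_bounded)
  qed
  define \<Phi> where "\<Phi> u = Bcontfun (ext_cont (?\<Psi> (apply_bcontfun u)) a b)" for u :: "real \<Rightarrow>\<^sub>C real"
  have \<Phi>_apply: "\<Phi> u t = ?\<Psi> u (clamp a b t)" for u t
    unfolding \<Phi>_def using ext_bcontfun[of "apply_bcontfun u"]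
    by (simp add: Bcontfun_inverse ext_cont_def)
  have "dist (\<Phi> u) (\<Phi> v) \<le> 1/2 * dist u v" for u v
  proof (rule dist_bound)
    fix t
    have "clamp a b t \<in> {a..b}" using clamp_in_interval[of a b t] \<open>a \<le> b\<close> by simp
    then have "dist (\<Phi> u t) (\<Phi> v t) \<le> L / K * dist u v"
      unfolding \<Phi>_apply dist_real_def
      by (intro weighted_picard_dist_le[OF cont lip \<open>0 < K\<close>])
        (auto simp flip: dist_real_def intro: dist_bounded)
    also have "\<dots> \<le> 1/2 * dist u v" by (rule mult_right_mono[OF \<open>L / K \<le> 1/2\<close> zero_le_dist])
    finally show "dist (\<Phi> u t) (\<Phi> v t) \<le> 1/2 * dist u v" .
  qed
  then obtain u where u: "\<Phi> u = u"
    using banach_fix_type[of "1/2" \<Phi>] by auto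
  define X where "X t = exp (K * (t - a)) * u t" for t
  show ?thesis
  proof (intro exI conjI ballI)
    show "continuous_on {a..b} X"
      unfolding X_def by (intro continuous_intros continuous_on_apply_bcontfun)
    fix t assume "t \<in> {a..b}"
    then have "u t = ?\<Psi> u t" by (metis \<Phi>_apply u clamp_cancel_cbox cbox_interval)
    then show "X t = x0 + integral {a..t} (\<lambda>s. G s (X s))"
      by (simp add: X_def weighted_picard_def mult_exp_exp flip: exp_add)
  qed
qed

lemma ode_solution_exists_Icc:
  fixes G :: "real \<Rightarrow> real \<Rightarrow> real"
  assumes cont: "continuous_on UNIV (case_prod G)" and "a \<le> b"
    and lip: "\<forall>t\<in>{a..b}. L-lipschitz_on UNIV (G t)"
  shows "\<exists>X. X a = x0 \<and> ode_solution_on G {a..b} X"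
proof -
  obtain X where X_cont: "continuous_on {a..b} X"
    and X_eq: "\<And>t. t \<in> {a..b} \<Longrightarrow> X t = x0 + integral {a..t} (\<lambda>s. G s (X s))"
    using integral_equation_solution_exists_Icc[OF assms] by blast
  have "continuous_on {a..b} (\<lambda>s. G s (X s))"
    by (rule continuous_on_compose_case_prod[OF cont X_cont])
  then have deriv: "((\<lambda>t. x0 + integral {a..t} (\<lambda>s. G s (X s))) has_real_derivative G t (X t))
      (at t within {a..b})" if "t \<in> {a..b}" for t
    using integral_has_real_derivative[of a b _ t] that by (auto intro!: derivative_eq_intros)
  have "(X has_real_derivative G t (X t)) (at t within {a..b})" if "t \<in> {a..b}" for t
    by (rule has_field_derivative_transform_within[OF deriv[OF that] zero_less_one that])
      (simp add: X_eq)
  moreover have "X a = x0" using X_eq[of a] \<open>a \<le> b\<close> by simp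
  ultimately show ?thesis unfolding ode_solution_on_def by blast
qed

lemma ode_solution_exists_atLeast:
  fixes G :: "real \<Rightarrow> real \<Rightarrow> real"
  assumes cont: "continuous_on UNIV (case_prod G)"
    and lip: "\<And>b. \<exists>L. \<forall>t\<in>{a..b}. L-lipschitz_on UNIV (G t)"
  shows "\<exists>X. X a = x0 \<and> ode_solution_on G {a..} X"
proof -
  have "\<exists>X. X a = x0 \<and> ode_solution_on G {a..a + real n} X" for n :: nat
    using lip[of "a + real n"] ode_solution_exists_Icc[OF cont, of a "a + real n"] by auto
  then obtain sol where sol_init: "\<And>n. sol n a = x0"
    and sol: "\<And>n. ode_solution_on G {a..a + real n} (sol n)"
    by metis
  have sol_agree: "sol m t = sol n t" if "t \<in> {a..a + real m}" "m \<le> n" for m n t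
  proof -
    obtain L where "\<forall>s\<in>{a..a + real m}. L-lipschitz_on UNIV (G s)" using lip by blast
    moreover have "ode_solution_on G {a..a + real m} (sol n)"
      using \<open>m \<le> n\<close> by (intro ode_solution_on_subset[OF sol[of n]]) auto
    ultimately show ?thesis
      using ode_solutions_Icc_eq[OF _ sol[of m]] sol_init that(1) by metis
  qed
  define X where "X t = sol (nat \<lceil>t - a\<rceil>) t" for t
  have X_eq: "X s = sol n s" if "s \<in> {a..a + real n}" for n s
    unfolding X_def using that by (intro sol_agree) (auto, linarith)
  have "(X has_real_derivative G t (X t)) (at t within {a..})" if "a \<le> t" for t
  proof -
    define n where "n = nat \<lceil>t - a\<rceil> + 1"
    have "t < a + real n" unfolding n_def using that by simp linarith
    have within_eq: "at t within {a..a + real n} = at t within {a..}"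
      by (rule at_within_nhd[where S = "{..<a + real n}"]) (use \<open>t < a + real n\<close> that in auto)
    have "(sol n has_real_derivative G t (sol n t)) (at t within {a..a + real n})"
      using sol[of n] that \<open>t < a + real n\<close> unfolding ode_solution_on_def by auto
    then have "(sol n has_real_derivative G t (sol n t)) (at t within {a..})"
      by (simp only: within_eq)
    then have "(X has_real_derivative G t (sol n t)) (at t within {a..})"
    proof (rule has_field_derivative_transform_within[where d = "a + real n - t"])
      fix s assume "s \<in> {a..}" "dist s t < a + real n - t"
      then show "sol n s = X s" using X_eq[of s n] by (auto simp: dist_real_def)
    qed (use that \<open>t < a + real n\<close> in auto)
    then show ?thesis
      using X_eq[of t n] that \<open>t < a + real n\<close> by simp
  qed
  moreover have "X a = x0" by (simp add: X_def sol_init)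
  ultimately show ?thesis unfolding ode_solution_on_def by auto
qed

lemma ode_solutions_atLeast_less:
  assumes lip: "\<And>b. \<exists>L. \<forall>t\<in>{a..b}. L-lipschitz_on UNIV (G t)"
    and X: "ode_solution_on G {a..} X" and Y: "ode_solution_on G {a..} Y"
    and "X a < Y a" "a \<le> t"
  shows "X t < Y t"
proof -
  obtain L where "\<forall>s\<in>{a..t}. L-lipschitz_on UNIV (G s)" using lip by blast
  moreover have "ode_solution_on G {a..t} X" "ode_solution_on G {a..t} Y"
    using X Y by (auto elim: ode_solution_on_subset)
  ultimately show ?thesis
    using ode_solutions_Icc_less \<open>X a < Y a\<close> \<open>a \<le> t\<close> by fastforce
qed

section \<open>Outgoing null geodesics\<close>

definition geodesic_field ::
  "(real \<Rightarrow> real \<Rightarrow> real) \<Rightarrow> (real \<Rightarrow> real) \<Rightarrow> (real \<Rightarrow> real) \<Rightarrow> real \<Rightarrow> real \<Rightarrow> real" where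
  "geodesic_field h xp xm v x = h v x * (x - xp v) * (x - xm v) / 2"

lemma outgoing_geodesic_iff_ode_solution:
  "outgoing_geodesic h xp xm v1 X \<longleftrightarrow> ode_solution_on (geodesic_field h xp xm) {v1..} X"
  unfolding outgoing_geodesic_def ode_solution_on_def geodesic_field_def by auto

locale bounded_horizons =
  fixes h :: "real \<Rightarrow> real \<Rightarrow> real" and xp xm :: "real \<Rightarrow> real" and v1 m M :: real
  assumes h_cont: "continuous_on UNIV (case_prod h)"
    and h_deriv: "\<And>v x. (h v has_real_derivative deriv (h v) x) (at x)"
    and h_deriv_cont: "continuous_on UNIV (\<lambda>(v, x). deriv (h v) x)"
    and xp_cont: "continuous_on UNIV xp" and xm_cont: "continuous_on UNIV xm"
    and horizons_in_strip: "\<And>v. v1 \<le> v \<Longrightarrow> m \<le> xm v \<and> xm v < xp v \<and> xp v \<le> M"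
begin

text \<open>Freezing the field outside \<open>[m, M]\<close> makes it globally Lipschitz, so that all solutions
  exist for all times, without changing the geodesics between the horizons.\<close>
definition clamped_field :: "real \<Rightarrow> real \<Rightarrow> real" where
  "clamped_field v x = geodesic_field h xp xm v (clamp m M x)"

lemma clamped_field_eq_geodesic_field:
  "v1 \<le> v \<Longrightarrow> xm v \<le> x \<Longrightarrow> x \<le> xp v \<Longrightarrow> clamped_field v x = geodesic_field h xp xm v x"
  using horizons_in_strip[of v] by (simp add: clamped_field_def cbox_interval)

lemma horizons_continuous_fst:
  "continuous_on UNIV (\<lambda>p. xp (fst p))" "continuous_on UNIV (\<lambda>p. xm (fst p))"
  by (intro continuous_on_compose2[OF xp_cont] continuous_on_compose2[OF xm_cont]
      continuous_intros; simp)+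

lemma geodesic_field_continuous: "continuous_on UNIV (case_prod (geodesic_field h xp xm))"
  using h_cont horizons_continuous_fst
  unfolding geodesic_field_def case_prod_unfold by (intro continuous_intros) auto

lemma clamped_field_continuous: "continuous_on UNIV (case_prod clamped_field)"
proof -
  have "continuous_on UNIV (\<lambda>x. clamp m M x :: real)"
    by (rule clamp_continuous_on) (rule continuous_on_id)
  from continuous_on_compose2[OF this continuous_on_snd[OF continuous_on_id]]
  have "continuous_on UNIV (\<lambda>p. clamp m M (snd p) :: real)" by simp
  then have "continuous_on UNIV (\<lambda>p. (fst p, clamp m M (snd p) :: real))"
    by (intro continuous_on_Pair continuous_on_fst continuous_on_id)
  from continuous_on_compose2[OF geodesic_field_continuous this]
  show ?thesis unfolding clamped_field_def case_prod_unfold by simp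
qed

lemma clamped_field_lipschitz: "\<exists>L. \<forall>t\<in>{a..b}. L-lipschitz_on UNIV (clamped_field t)"
proof -
  define g' where "g' v x = (deriv (h v) x * (x - xp v) * (x - xm v) + h v x * ((x - xm v) + (x - xp v))) / 2"
    for v x
  have "(geodesic_field h xp xm v has_real_derivative g' v x) (at x)" for v x
    unfolding geodesic_field_def[abs_def] g'_def
    by (auto intro!: derivative_eq_intros h_deriv simp: field_simps)
  moreover have "continuous_on UNIV (case_prod g')"
    using h_cont h_deriv_cont horizons_continuous_fst
    unfolding g'_def case_prod_unfold by (intro continuous_intros) auto
  ultimately obtain L where L: "\<forall>t\<in>{a..b}. L-lipschitz_on {m..M} (geodesic_field h xp xm t)"
    using lipschitz_on_Icc_of_continuous_derivative by blast
  have clamp_lipschitz: "1-lipschitz_on UNIV (\<lambda>x. clamp m M x :: real)"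
    by (rule lipschitz_onI) (metis dist_clamps_le_dist_args mult_1, simp)
  have clamp_range: "range (\<lambda>x. clamp m M x) \<subseteq> {m..M}"
    using clamp_in_interval[of m M] horizons_in_strip[of v1] by force
  have "(L * 1)-lipschitz_on UNIV (clamped_field t)" if "t \<in> {a..b}" for t
    unfolding clamped_field_def
    by (rule lipschitz_on_compose2[OF clamp_lipschitz lipschitz_on_subset[OF _ clamp_range]])
      (use L that in blast)
  then show ?thesis by blast
qed

lemma ode_solution_clamped_iff_geodesic:
  assumes "between_AHs xp xm v1 X"
  shows "ode_solution_on clamped_field {v1..} X \<longleftrightarrow> ode_solution_on (geodesic_field h xp xm) {v1..} X"
  using assms clamped_field_eq_geodesic_field
  unfolding ode_solution_on_def between_AHs_def by (auto simp: less_imp_le)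

lemma trapped_data_iff:
  "x0 \<in> trapped_data h xp xm v1 \<longleftrightarrow>
    (\<exists>X. ode_solution_on clamped_field {v1..} X \<and> X v1 = x0 \<and> between_AHs xp xm v1 X)"
  unfolding trapped_data_def outgoing_geodesic_iff_ode_solution
  using ode_solution_clamped_iff_geodesic by blast

lemma trapped_data_subset: "trapped_data h xp xm v1 \<subseteq> {m..M}"
  using horizons_in_strip[of v1]
  by (force simp: trapped_data_def between_AHs_def)

lemma trapped_data_is_interval: "is_interval (trapped_data h xp xm v1)"
  unfolding is_interval_1
proof (intro ballI allI impI)
  fix p r q assume p: "p \<in> trapped_data h xp xm v1" and r: "r \<in> trapped_data h xp xm v1"
    and "p \<le> q \<and> q \<le> r"
  then consider "q = p" | "q = r" | "p < q" "q < r" by fastforce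
  then show "q \<in> trapped_data h xp xm v1"
  proof cases
    case 3
    obtain X where X: "ode_solution_on clamped_field {v1..} X" "X v1 = p" "between_AHs xp xm v1 X"
      using p trapped_data_iff by blast
    obtain Z where Z: "ode_solution_on clamped_field {v1..} Z" "Z v1 = r" "between_AHs xp xm v1 Z"
      using r trapped_data_iff by blast
    obtain Y where Y: "ode_solution_on clamped_field {v1..} Y" "Y v1 = q"
      using ode_solution_exists_atLeast[OF clamped_field_continuous clamped_field_lipschitz] by blast
    have "X t < Y t" "Y t < Z t" if "v1 \<le> t" for t
      using ode_solutions_atLeast_less[OF clamped_field_lipschitz] X Y Z 3 that by auto
    with X Z have "between_AHs xp xm v1 Y"
      unfolding between_AHs_def by (meson order.strict_trans)
    with Y show ?thesis using trapped_data_iff by blast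
  qed (use p r in auto)
qed

lemma barriers_subset_trapped_data:
  assumes y_deriv: "\<And>v. v1 \<le> v \<Longrightarrow> (y has_real_derivative y' v) (at v within {v1..})"
    and z_deriv: "\<And>v. v1 \<le> v \<Longrightarrow> (z has_real_derivative z' v) (at v within {v1..})"
    and between: "\<And>v. v1 \<le> v \<Longrightarrow> xm v < y v \<and> y v < z v \<and> z v < xp v"
    and sub: "\<And>v. v1 \<le> v \<Longrightarrow> y' v < geodesic_field h xp xm v (y v)"
    and super: "\<And>v. v1 \<le> v \<Longrightarrow> geodesic_field h xp xm v (z v) < z' v"
  shows "{y v1<..<z v1} \<subseteq> trapped_data h xp xm v1"
proof
  fix x0 assume x0: "x0 \<in> {y v1<..<z v1}"
  obtain X where X: "ode_solution_on clamped_field {v1..} X" "X v1 = x0"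
    using ode_solution_exists_atLeast[OF clamped_field_continuous clamped_field_lipschitz] by blast
  have "y t < X t" if "v1 \<le> t" for t
  proof (rule ode_solution_above_subsolution[OF X(1) y_deriv])
    fix v assume "v1 \<le> v"
    with sub[of v] between[of v] show "y' v < clamped_field v (y v)"
      by (simp add: clamped_field_eq_geodesic_field)
  qed (use x0 X that in auto)
  moreover have "X t < z t" if "v1 \<le> t" for t
  proof (rule ode_solution_below_supersolution[OF X(1) z_deriv])
    fix v assume "v1 \<le> v"
    with super[of v] between[of v] show "clamped_field v (z v) < z' v"
      by (simp add: clamped_field_eq_geodesic_field)
  qed (use x0 X that in auto)
  ultimately have "between_AHs xp xm v1 X"
    unfolding between_AHs_def using between by force
  with X show "x0 \<in> trapped_data h xp xm v1" using trapped_data_iff by blast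
qed

theorem type2_if_barriers:
  assumes "\<And>v. v1 \<le> v \<Longrightarrow> (y has_real_derivative y' v) (at v within {v1..})"
    and "\<And>v. v1 \<le> v \<Longrightarrow> (z has_real_derivative z' v) (at v within {v1..})"
    and between: "\<And>v. v1 \<le> v \<Longrightarrow> xm v < y v \<and> y v < z v \<and> z v < xp v"
    and "\<And>v. v1 \<le> v \<Longrightarrow> y' v < geodesic_field h xp xm v (y v)"
    and "\<And>v. v1 \<le> v \<Longrightarrow> geodesic_field h xp xm v (z v) < z' v"
  shows "type2 h xp xm"
proof -
  let ?T = "trapped_data h xp xm v1"
  have "?T \<in> lmeasurable"
    using trapped_data_is_interval trapped_data_subset
    by (intro measurable_convex is_interval_convex) (auto intro: bounded_subset[OF compact_imp_bounded[OF compact_Icc]])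
  then have "?T \<in> sets lebesgue" by (rule fmeasurableD)
  have "0 < emeasure lebesgue {y v1<..<z v1}"
    using between[of v1] by simp
  also have "\<dots> \<le> emeasure lebesgue ?T"
    using barriers_subset_trapped_data[OF assms] \<open>?T \<in> sets lebesgue\<close> by (rule emeasure_mono)
  finally show ?thesis
    unfolding type2_def using \<open>?T \<in> sets lebesgue\<close> by blast
qed

end

lemma type2_if_eventually_barriers:
  assumes h_cont: "continuous_on UNIV (case_prod h)"
    and h_deriv: "\<And>v x. (h v has_real_derivative deriv (h v) x) (at x)"
    and h_deriv_cont: "continuous_on UNIV (\<lambda>(v, x). deriv (h v) x)"
    and xp_deriv: "\<And>v. (xp has_real_derivative xp' v) (at v)" and "\<And>v. xp' v < 0"
    and xm_deriv: "\<And>v. (xm has_real_derivative xm' v) (at v)" and "\<And>v. 0 < xm' v"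
    and "\<And>v. xm v < xp v"
    and y_deriv: "\<And>v. (y has_real_derivative y' v) (at v)"
    and z_deriv: "\<And>v. (z has_real_derivative z' v) (at v)"
    and barriers: "\<forall>\<^sub>F v in at_top. xm v < y v \<and> y v < z v \<and> z v < xp v \<and>
      y' v < geodesic_field h xp xm v (y v) \<and> geodesic_field h xp xm v (z v) < z' v"
  shows "type2 h xp xm"
proof -
  obtain v1 where v1: "\<And>v. v1 \<le> v \<Longrightarrow> xm v < y v \<and> y v < z v \<and> z v < xp v \<and>
      y' v < geodesic_field h xp xm v (y v) \<and> geodesic_field h xp xm v (z v) < z' v"
    using barriers by (auto simp: eventually_at_top_linorder)
  have "xp v \<le> xp v1" "xm v1 \<le> xm v" if "v1 \<le> v" for v
    using xp_deriv xm_deriv assms(5,7) less_imp_le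
    by (blast intro: DERIV_nonpos_imp_nonincreasing[OF that] DERIV_nonneg_imp_nondecreasing[OF that])+
  then interpret bounded_horizons h xp xm v1 "xm v1" "xp v1"
    using assms(1-3,8) has_real_derivative_imp_continuous_on[of UNIV xp xp']
      has_real_derivative_imp_continuous_on[of UNIV xm xm'] xp_deriv xm_deriv
    by unfold_locales auto
  show ?thesis
    by (rule type2_if_barriers[OF has_field_derivative_at_within[OF y_deriv]
          has_field_derivative_at_within[OF z_deriv]]) (use v1 in auto)
qed

lemma geodesic_field_below_upper_barrier:
  assumes "0 < xp v" "xm v < 0" "0 < \<alpha>" "\<alpha> < 1" "(1 - \<epsilon>) * hc < h v (\<alpha> * xp v)"
    and "- (hc / 2) * (1 - \<epsilon>) * ((1 - \<alpha>) / \<alpha>) < p' / ((\<alpha> * xp v - xm v) * xp v)"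
  shows "geodesic_field h xp xm v (\<alpha> * xp v) < \<alpha> * p'"
proof -
  define P where "P = (\<alpha> * xp v - xm v) * xp v"
  define R where "R = - (hc / 2) * (1 - \<epsilon>) * ((1 - \<alpha>) / \<alpha>)"
  have "0 < \<alpha> * xp v" using assms(1,3) by simp
  then have "0 < P" unfolding P_def using assms(1,2) by (intro mult_pos_pos) linarith+
  have "0 < (1 - \<alpha>) * P / 2" using \<open>0 < P\<close> \<open>\<alpha> < 1\<close> by simp
  have "R < p' / P" using assms(6) by (simp add: P_def R_def)
  then have "R * P < p'" using \<open>0 < P\<close> by (simp add: pos_less_divide_eq)
  have "geodesic_field h xp xm v (\<alpha> * xp v) = - (h v (\<alpha> * xp v) * ((1 - \<alpha>) * P / 2))"
    by (simp add: geodesic_field_def P_def field_simps)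
  also have "\<dots> < - ((1 - \<epsilon>) * hc * ((1 - \<alpha>) * P / 2))"
    using mult_strict_right_mono[OF assms(5) \<open>0 < (1 - \<alpha>) * P / 2\<close>] by (simp only: neg_less_iff_less)
  also have "\<dots> = \<alpha> * (R * P)"
    using \<open>0 < \<alpha>\<close> by (simp add: R_def field_simps)
  also have "\<dots> < \<alpha> * p'"
    using \<open>R * P < p'\<close> \<open>0 < \<alpha>\<close> by simp
  finally show ?thesis .
qed

lemma geodesic_field_above_lower_barrier:
  assumes "xm v < 0" "0 < \<beta>" "0 < xp v + \<beta> * xm v" "h v (- \<beta> * xm v) < (1 + \<epsilon>) * hc"
    and "m' / ((xp v + \<beta> * xm v) * xm v) < - (hc / 2) * (1 + \<epsilon>) * ((1 + \<beta>) / \<beta>)"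
  shows "- \<beta> * m' < geodesic_field h xp xm v (- \<beta> * xm v)"
proof -
  define Q where "Q = (xp v + \<beta> * xm v) * xm v"
  define R where "R = - (hc / 2) * (1 + \<epsilon>) * ((1 + \<beta>) / \<beta>)"
  have "Q < 0" unfolding Q_def using assms(1,3) by (simp add: mult_pos_neg)
  have "0 < (1 + \<beta>) * - Q / 2" using \<open>Q < 0\<close> \<open>0 < \<beta>\<close> by (simp add: mult_pos_neg)
  have "m' / Q < R" using assms(5) by (simp add: Q_def R_def)
  then have "R * Q < m'" using \<open>Q < 0\<close> by (simp add: neg_divide_less_eq)
  then have "- \<beta> * m' < - \<beta> * (R * Q)" using \<open>0 < \<beta>\<close> by simp
  also have "\<dots> = - ((1 + \<epsilon>) * hc * ((1 + \<beta>) * - Q / 2))"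
    using \<open>0 < \<beta>\<close> by (simp add: R_def field_simps)
  also have "\<dots> < - (h v (- \<beta> * xm v) * ((1 + \<beta>) * - Q / 2))"
    using mult_strict_right_mono[OF assms(4) \<open>0 < (1 + \<beta>) * - Q / 2\<close>] by (simp only: neg_less_iff_less)
  also have "\<dots> = geodesic_field h xp xm v (- \<beta> * xm v)"
    by (simp add: geodesic_field_def Q_def field_simps)
  finally show ?thesis .
qed

lemma geodesic_barriers_at:
  assumes "0 < xp v" "xm v < 0" "0 < \<alpha>" "\<alpha> < 1" "0 < \<beta>" "- \<alpha> / \<beta> < xm v / xp v"
    and "(1 - \<epsilon>\<alpha>) * hc < h v (\<alpha> * xp v)" "h v (- \<beta> * xm v) < (1 + \<epsilon>\<beta>) * hc"
    and "m' / ((xp v + \<beta> * xm v) * xm v) < - (hc / 2) * (1 + \<epsilon>\<beta>) * ((1 + \<beta>) / \<beta>)"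
    and "- (hc / 2) * (1 - \<epsilon>\<alpha>) * ((1 - \<alpha>) / \<alpha>) < p' / ((\<alpha> * xp v - xm v) * xp v)"
  shows "xm v < - \<beta> * xm v \<and> - \<beta> * xm v < \<alpha> * xp v \<and> \<alpha> * xp v < xp v \<and>
    - \<beta> * m' < geodesic_field h xp xm v (- \<beta> * xm v) \<and> geodesic_field h xp xm v (\<alpha> * xp v) < \<alpha> * p'"
proof -
  have "- \<alpha> * xp v < \<beta> * xm v" using assms(1,5,6) by (simp add: field_simps)
  moreover have "\<alpha> * xp v < xp v" using mult_strict_right_mono[OF assms(4,1)] by simp
  moreover have "\<beta> * xm v < 0" using mult_pos_neg[OF assms(5,2)] .
  moreover have "- \<beta> * m' < geodesic_field h xp xm v (- \<beta> * xm v)"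
    by (rule geodesic_field_above_lower_barrier[where xm = xm and v = v])
      (use assms(2,5,8,9) calculation in auto)
  moreover have "geodesic_field h xp xm v (\<alpha> * xp v) < \<alpha> * p'"
    by (rule geodesic_field_below_upper_barrier[where xp = xp and v = v]) (use assms in auto)
  ultimately show ?thesis using assms(2) by simp
qed

lemma pos_if_outer_barrier_condition:
  fixes hc p' xp xm \<alpha> \<epsilon> :: real
  assumes "0 \<le> hc" "p' < 0" "0 < xp" "xm < 0" "0 < \<alpha>"
    and "- (hc / 2) * (1 - \<epsilon>) * ((1 - \<alpha>) / \<alpha>) < p' / ((\<alpha> * xp - xm) * xp)"
  shows "0 < hc"
proof -
  have "0 < (\<alpha> * xp - xm) * xp"
    using mult_pos_pos[OF assms(5,3)] assms(3,4) by (intro mult_pos_pos) linarith+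
  then have "p' / ((\<alpha> * xp - xm) * xp) < 0" using assms(2) by (simp add: divide_neg_pos)
  with assms(1,6) show ?thesis by (cases "hc = 0") auto
qed

theorem proposition5:
  fixes h :: "real \<Rightarrow> real \<Rightarrow> real"
    and xp xm xp' xm' :: "real \<Rightarrow> real"
    and hc \<alpha> \<beta> \<epsilon>\<alpha> \<epsilon>\<beta> v0 :: real
  assumes h_pos: "\<And>v x. h v x > 0"
    and h_smooth: "\<And>n v x. (deriv ^^ n) (h v) differentiable (at x)"
    and h_cont: "\<And>n. continuous_on UNIV (\<lambda>(v, x). (deriv ^^ n) (h v) x)"
    and h_lim: "\<exists>\<delta>>0. \<exists>H. \<forall>n. uniform_limit {-\<delta>..\<delta>} (\<lambda>v. (deriv ^^ n) (h v)) ((deriv ^^ n) H) at_top"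
    and hc: "((\<lambda>v. h v 0) \<longlongrightarrow> hc) at_top"
    and xp_deriv: "\<And>v. (xp has_real_derivative xp' v) (at v)"
    and xm_deriv: "\<And>v. (xm has_real_derivative xm' v) (at v)"
    and order: "\<And>v. xm v < xp v"
    and outer_shrinks: "\<And>v. xp' v < 0"
    and case2: "\<And>v. xm' v > 0"
    and xp_lim: "(xp \<longlongrightarrow> 0) at_top"
    and xm_lim: "(xm \<longlongrightarrow> 0) at_top"
    and ratio_lim: "((\<lambda>v. xm v / xp v) \<longlongrightarrow> 0) at_top"
    and \<alpha>: "0 < \<alpha>" "\<alpha> < 1" and \<beta>: "0 < \<beta>"
    and \<epsilon>: "\<epsilon>\<alpha> > 0" "\<epsilon>\<beta> > 0"
    and cond_minus: "\<And>v. v > v0 \<Longrightarrow>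
        xm' v / ((xp v + \<beta> * xm v) * xm v) < - (hc / 2) * (1 + \<epsilon>\<beta>) * ((1 + \<beta>) / \<beta>)"
    and cond_plus: "\<And>v. v > v0 \<Longrightarrow>
        xp' v / ((\<alpha> * xp v - xm v) * xp v) > - (hc / 2) * (1 - \<epsilon>\<alpha>) * ((1 - \<alpha>) / \<alpha>)"
  shows "type2 h xp xm"
proof -
  have xp_pos: "0 < xp v" for v
    by (rule pos_if_derivative_neg_tendsto_zero[OF xp_deriv outer_shrinks xp_lim])
  have "0 < - xm v" for v
    by (rule pos_if_derivative_neg_tendsto_zero[OF DERIV_minus[OF xm_deriv]])
      (use case2 tendsto_minus[OF xm_lim] in auto)
  then have xm_neg: "xm v < 0" for v by simp
  have "0 \<le> hc" by (rule tendsto_lowerbound[OF hc]) (simp_all add: less_imp_le[OF h_pos])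
  then have "0 < hc"
    by (rule pos_if_outer_barrier_condition[OF _ outer_shrinks xp_pos xm_neg \<alpha>(1) cond_plus[of "v0 + 1"]])
      simp
  from h_lim obtain \<delta> H where "0 < \<delta>"
    and "uniform_limit {-\<delta>..\<delta>} (\<lambda>v. (deriv ^^ 0) (h v)) ((deriv ^^ 0) H) at_top"
    by blast
  moreover have "isCont (h v) x" for v x
    using h_smooth[of 0 v x] by (simp add: differentiable_imp_continuous_within)
  ultimately have h_along: "((\<lambda>v. h v (u v)) \<longlongrightarrow> hc) at_top" if "(u \<longlongrightarrow> 0) at_top" for u
    using tendsto_compose_vanishing_of_uniform_limit[of \<delta> h H hc u] hc that by simp
  have "((\<lambda>v. \<alpha> * xp v) \<longlongrightarrow> 0) at_top" "((\<lambda>v. - \<beta> * xm v) \<longlongrightarrow> 0) at_top"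
    by (rule tendsto_mult_right_zero[OF xp_lim], rule tendsto_mult_right_zero[OF xm_lim])
  then have "\<forall>\<^sub>F v in at_top. v0 < v \<and> - \<alpha> / \<beta> < xm v / xp v \<and>
      (1 - \<epsilon>\<alpha>) * hc < h v (\<alpha> * xp v) \<and> h v (- \<beta> * xm v) < (1 + \<epsilon>\<beta>) * hc"
    using \<alpha> \<beta> \<epsilon> \<open>0 < hc\<close>
    by (intro eventually_conj eventually_gt_at_top order_tendstoD[OF ratio_lim]
        order_tendstoD[OF h_along]) auto
  then have "\<forall>\<^sub>F v in at_top. xm v < - \<beta> * xm v \<and> - \<beta> * xm v < \<alpha> * xp v \<and>
      \<alpha> * xp v < xp v \<and> - \<beta> * xm' v < geodesic_field h xp xm v (- \<beta> * xm v) \<and>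
      geodesic_field h xp xm v (\<alpha> * xp v) < \<alpha> * xp' v"
    by eventually_elim (rule geodesic_barriers_at; use xp_pos xm_neg \<alpha> \<beta> cond_minus cond_plus in auto)
  moreover have "(h v has_real_derivative deriv (h v) x) (at x)" for v x
    using h_smooth[of 0 v x] by (simp add: DERIV_deriv_iff_real_differentiable)
  ultimately show ?thesis
    using h_cont[of 0] h_cont[of 1] type2_if_eventually_barriers[OF _ _ _ xp_deriv outer_shrinks
        xm_deriv case2 order DERIV_cmult[OF xm_deriv, of "- \<beta>"] DERIV_cmult[OF xp_deriv, of \<alpha>]]
    by simp
qed

end
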